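(* Let $d\ge4$ be an integer and $\Gamma=\mathbb{Z}_2^d$. Then $\Gamma$ is not $(D(\Gamma)-1)$-close.
   Context: For a finite abelian group $\Gamma$, its Davenport constant $D(\Gamma)$ is the minimum integer $\ell$ such that every sequence of $\ell$ elements of $\Gamma$ has a nonempty subsequence summing to $0$. For an integer $k\ge1$, a finite abelian group $\Gamma$ is $k$-close if for every matroid $M$, every labeling $\psi\colon E(M)\to\Gamma$, every $g\in\Gamma$ and every basis $B$ of $M$, if $M$ has a basis with label $g$ then it has a basis $B^*$ with $\psi(B^* )=g$ and $|B\setminus B^*|\le k$, where $\psi(S):=\sum_{x\in S}\psi(x)$. *)

theory Defs
  imports "HOL-Algebra.Algebra"
begin

definition matroid_bases :: "'e set \<Rightarrow> 'e set set \<Rightarrow> bool" where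
  "matroid_bases E \<B> \<longleftrightarrow> finite E \<and> \<B> \<noteq> {} \<and> (\<forall>B\<in>\<B>. B \<subseteq> E) \<and>
     (\<forall>B1\<in>\<B>. \<forall>B2\<in>\<B>. \<forall>x\<in>B1 - B2. \<exists>y\<in>B2 - B1. insert y (B1 - {x}) \<in> \<B>)"

definition davenport :: "('a, 'b) monoid_scheme \<Rightarrow> nat" where
  "davenport G = (LEAST l. \<forall>s. (\<forall>i<l. s i \<in> carrier G) \<longrightarrow>
      (\<exists>I. I \<subseteq> {..<l} \<and> I \<noteq> {} \<and> finprod G s I = \<one>\<^bsub>G\<^esub>))"

text \<open>k-closeness. Matroids are taken with ground sets of natural numbers
  (every finite matroid is isomorphic to one of these).\<close>
definition k_close :: "('a, 'b) monoid_scheme \<Rightarrow> nat \<Rightarrow> bool" where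
  "k_close G k \<longleftrightarrow> (\<forall>(E::nat set) \<B> \<psi> g B.
      matroid_bases E \<B> \<longrightarrow> \<psi> \<in> E \<rightarrow> carrier G \<longrightarrow> g \<in> carrier G \<longrightarrow> B \<in> \<B> \<longrightarrow>
      (\<exists>B'\<in>\<B>. finprod G \<psi> B' = g) \<longrightarrow>
      (\<exists>B'\<in>\<B>. finprod G \<psi> B' = g \<and> card (B - B') \<le> k))"

definition Z2pow :: "nat \<Rightarrow> (nat \<Rightarrow> int) monoid" where
  "Z2pow d = product_group {..<d} (\<lambda>_. integer_mod_group 2)"

end

theory Submission
  imports Defs
begin

text \<open>
  Label 2n distinct group elements on a ground set E, with the first half B and the second
  half B' having different products, and let g be the label of B'. The n-subsets of E whose
  label is not g, together with B', are the bases of a matroid: an exchange can only be blocked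
  when all candidate exchanges have label g, and since distinct elements give distinct labels
  there is then a single candidate, which is the other basis itself. In this matroid B' is the
  only basis with label g and it is disjoint from B, so the group is not k-close for k < n.
  For Z_2^d we have D \<le> d + 1 (among 2^(d+1) subsums two coincide and their symmetric
  difference sums to 0), and 2(d + 1) < 2^d leaves room for the 2n labels when d \<ge> 4.
\<close>

context comm_group
begin

lemma finprod_sym_diff_exp2:
  assumes exp2: "\<And>x. x \<in> carrier G \<Longrightarrow> x \<otimes> x = \<one>"
    and fin: "finite I" "finite J" and s: "s \<in> I \<union> J \<rightarrow> carrier G"
  shows "finprod G s (sym_diff I J) = finprod G s I \<otimes> finprod G s J"
proof -
  define a where "a = finprod G s (I - J)"
  define b where "b = finprod G s (J - I)"
  define c where "c = finprod G s (I \<inter> J)"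
  have abc: "a \<in> carrier G" "b \<in> carrier G" "c \<in> carrier G"
    unfolding a_def b_def c_def using s by (auto intro!: finprod_closed)
  have "finprod G s I = finprod G s ((I - J) \<union> (I \<inter> J))"
    by (simp add: Un_Diff_Int)
  also have "\<dots> = a \<otimes> c"
    unfolding a_def c_def by (rule finprod_Un_disjoint) (use fin s in auto)
  finally have I: "finprod G s I = a \<otimes> c" .
  have "finprod G s J = finprod G s ((J - I) \<union> (I \<inter> J))"
    by (metis Int_commute Un_Diff_Int)
  also have "\<dots> = b \<otimes> c"
    unfolding b_def c_def by (rule finprod_Un_disjoint) (use fin s in auto)
  finally have J: "finprod G s J = b \<otimes> c" .
  have "finprod G s (sym_diff I J) = a \<otimes> b"
    unfolding a_def b_def by (rule finprod_Un_disjoint) (use fin s in auto)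
  also have "\<dots> = (a \<otimes> c) \<otimes> (b \<otimes> c)"
    using abc exp2[of c] by (simp add: m_ac)
  finally show ?thesis using I J by simp
qed

lemma exists_subproduct_one_exp2:
  assumes exp2: "\<And>x. x \<in> carrier G \<Longrightarrow> x \<otimes> x = \<one>"
    and fin: "finite (carrier G)" and small: "card (carrier G) < 2 ^ n"
    and s: "\<forall>i<n. s i \<in> carrier G"
  shows "\<exists>I. I \<subseteq> {..<n} \<and> I \<noteq> {} \<and> finprod G s I = \<one>"
proof -
  have "\<not> inj_on (finprod G s) (Pow {..<n})"
  proof
    assume "inj_on (finprod G s) (Pow {..<n})"
    moreover have "finprod G s ` Pow {..<n} \<subseteq> carrier G" using s by (auto intro!: finprod_closed)
    ultimately have "card (Pow {..<n}) \<le> card (carrier G)"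
      using fin card_inj_on_le by blast
    then show False using small by (simp add: card_Pow)
  qed
  then obtain I J where IJ: "I \<subseteq> {..<n}" "J \<subseteq> {..<n}" "I \<noteq> J"
    and eq: "finprod G s I = finprod G s J"
    unfolding inj_on_def by auto
  have "finprod G s (sym_diff I J) = finprod G s I \<otimes> finprod G s I"
    using finprod_sym_diff_exp2[OF exp2, of I J s] IJ s eq by (auto intro: finite_subset)
  also have "\<dots> = \<one>" by (intro exp2 finprod_closed) (use IJ s in auto)
  finally show ?thesis using IJ by (intro exI[of _ "sym_diff I J"]) auto
qed

lemma davenport_le_exp2:
  assumes "\<And>x. x \<in> carrier G \<Longrightarrow> x \<otimes> x = \<one>"
    and "finite (carrier G)" and "card (carrier G) < 2 ^ n"
  shows "davenport G \<le> n"
  unfolding davenport_def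
  by (rule Least_le) (use exists_subproduct_one_exp2[OF assms] in blast)

lemma finprod_insert_cancel:
  assumes inj: "inj_on \<psi> E" and \<psi>: "\<psi> \<in> E \<rightarrow> carrier G"
    and B: "finite B" "B \<subseteq> E" and y: "y1 \<in> E - B" "y2 \<in> E - B"
    and eq: "finprod G \<psi> (insert y1 B) = finprod G \<psi> (insert y2 B)"
  shows "y1 = y2"
proof -
  have "finprod G \<psi> (insert y B) = \<psi> y \<otimes> finprod G \<psi> B" if "y \<in> E - B" for y
    by (rule finprod_insert) (use that B \<psi> in auto)
  then have "\<psi> y1 \<otimes> finprod G \<psi> B = \<psi> y2 \<otimes> finprod G \<psi> B"
    using eq y by simp
  moreover have "finprod G \<psi> B \<in> carrier G" using B \<psi> by (intro finprod_closed) auto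
  moreover have "\<psi> y1 \<in> carrier G" "\<psi> y2 \<in> carrier G" using \<psi> y by auto
  ultimately have "\<psi> y1 = \<psi> y2" by (metis r_cancel)
  then show ?thesis using inj y by (auto simp: inj_on_eq_iff)
qed

lemma matroid_bases_label_avoiding:
  assumes fin: "finite E" and inj: "inj_on \<psi> E" and \<psi>: "\<psi> \<in> E \<rightarrow> carrier G"
    and T0: "T0 \<subseteq> E" "card T0 = n"
  shows "matroid_bases E {T. T \<subseteq> E \<and> card T = n \<and> (finprod G \<psi> T \<noteq> g \<or> T = T0)}"
    (is "matroid_bases E ?\<B>")
  unfolding matroid_bases_def
proof (intro conjI ballI)
  show "finite E" by (rule fin)
  show "?\<B> \<noteq> {}" using T0 by auto
  show "B \<subseteq> E" if "B \<in> ?\<B>" for B using that by auto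
next
  fix B1 B2 x assume B1: "B1 \<in> ?\<B>" and B2: "B2 \<in> ?\<B>" and x: "x \<in> B1 - B2"
  have sub: "B1 \<subseteq> E" "B2 \<subseteq> E" and card: "card B1 = n" "card B2 = n"
    using B1 B2 by auto
  have finB: "finite B1" "finite B2" using sub fin finite_subset by auto
  have card_diff: "card (B2 - B1) = card (B1 - B2)"
    using finB card by (simp add: card_Diff_subset_Int Int_commute)
  show "\<exists>y\<in>B2 - B1. insert y (B1 - {x}) \<in> ?\<B>"
  proof (rule ccontr)
    assume blocked: "\<not> ?thesis"
    have "card B1 > 0" using x finB card_gt_0_iff by blast
    have exchange: "insert y (B1 - {x}) \<subseteq> E \<and> card (insert y (B1 - {x})) = n"
      if "y \<in> B2 - B1" for y
      using that sub x finB card \<open>card B1 > 0\<close> by (auto simp: card_insert_if)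
    then have labelled_g: "finprod G \<psi> (insert y (B1 - {x})) = g"
      and not_T0: "insert y (B1 - {x}) \<noteq> T0" if "y \<in> B2 - B1" for y
      using blocked that by blast+
    have "B1 - B2 \<noteq> {}" using x by blast
    then obtain y where y: "y \<in> B2 - B1"
      using card_diff finB by (metis all_not_in_conv card.empty card_0_eq finite_Diff)
    have "y' = y" if "y' \<in> B2 - B1" for y'
      by (rule finprod_insert_cancel[OF inj \<psi>, of "B1 - {x}"])
        (use that y sub finB labelled_g in auto)
    then have "B2 - B1 = {y}" using y by blast
    then have "card (B1 - B2) = 1" using card_diff by simp
    then obtain x' where "B1 - B2 = {x'}" by (rule card_1_singletonE)
    then have "B1 - B2 = {x}" using x by auto
    with \<open>B2 - B1 = {y}\<close> have "B2 = insert y (B1 - {x})" by blast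
    then show False using B2 labelled_g[OF y] not_T0[OF y] by auto
  qed
qed

lemma not_k_close_if_unbalanced_labeling:
  assumes inj: "inj_on \<psi> {..<2*n}" and \<psi>: "\<psi> \<in> {..<2*n} \<rightarrow> carrier G"
    and unbalanced: "finprod G \<psi> {..<n} \<noteq> finprod G \<psi> {n..<2*n}" and "k < n"
  shows "\<not> k_close G k"
proof
  assume close: "k_close G k"
  define g where "g = finprod G \<psi> {n..<2*n}"
  define \<B> where "\<B> = {T. T \<subseteq> {..<2*n} \<and> card T = n \<and> (finprod G \<psi> T \<noteq> g \<or> T = {n..<2*n})}"
  have top: "{n..<2*n} \<in> \<B>" and bottom: "{..<n} \<in> \<B>"
    using unbalanced by (auto simp: \<B>_def g_def)
  have matroid: "matroid_bases {..<2*n} \<B>"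
    unfolding \<B>_def by (rule matroid_bases_label_avoiding[OF _ inj \<psi>]) auto
  have "g \<in> carrier G" unfolding g_def by (intro finprod_closed) (use \<psi> in auto)
  with close matroid \<psi> bottom
  have "(\<exists>B'\<in>\<B>. finprod G \<psi> B' = g) \<Longrightarrow> (\<exists>B'\<in>\<B>. finprod G \<psi> B' = g \<and> card ({..<n} - B') \<le> k)"
    unfolding k_close_def by blast
  then obtain B' where B': "B' \<in> \<B>" "finprod G \<psi> B' = g" "card ({..<n} - B') \<le> k"
    using top g_def by blast
  then have "B' = {n..<2*n}" by (auto simp: \<B>_def)
  moreover have "{..<n} - {n..<2*n} = {..<n}" by auto
  ultimately show False using B' \<open>k < n\<close> by simp
qed

lemma exists_unbalanced_labeling:
  assumes fin: "finite (carrier G)" and large: "2 * n < card (carrier G)" and "n \<ge> 1"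
  obtains \<psi> where "inj_on \<psi> {..<2*n}" "\<psi> \<in> {..<2*n} \<rightarrow> carrier G"
    "finprod G \<psi> {..<n} \<noteq> finprod G \<psi> {n..<2*n}"
proof -
  obtain h where h: "bij_betw h {0..<card (carrier G)} (carrier G)"
    using ex_bij_betw_nat_finite[OF fin] by blast
  have h_inj: "inj_on h {..2*n}" and h_carrier: "h \<in> {..2*n} \<rightarrow> carrier G"
    using h large unfolding bij_betw_def
    by (auto intro: inj_on_subset)
  \<comment> \<open>Relabel position 0 by h c, for c = 0 or c = 2n; one of the two choices is unbalanced.\<close>
  define \<psi> where "\<psi> c = h \<circ> (\<lambda>i. if i = 0 then c else i)" for c :: nat
  have \<psi>_inj: "inj_on (\<psi> c) {..<2*n}" and \<psi>_carrier: "\<psi> c \<in> {..<2*n} \<rightarrow> carrier G"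
    if "c \<in> {0, 2*n}" for c
  proof -
    have "inj_on (\<lambda>i. if i = 0 then c else i) {..<2*n}"
      using that by (auto simp: inj_on_def)
    moreover have "(\<lambda>i. if i = 0 then c else i) ` {..<2*n} \<subseteq> {..2*n}"
      using that by auto
    ultimately show "inj_on (\<psi> c) {..<2*n}"
      unfolding \<psi>_def using comp_inj_on inj_on_subset[OF h_inj] by blast
    show "\<psi> c \<in> {..<2*n} \<rightarrow> carrier G"
      using that h_carrier by (auto simp: \<psi>_def)
  qed
  define r where "r = finprod G h {1..<n}"
  have r: "r \<in> carrier G" unfolding r_def by (intro finprod_closed) (use h_carrier in auto)
  have top: "finprod G (\<psi> c) {n..<2*n} = finprod G h {n..<2*n}" for c
    by (rule finprod_cong') (use \<open>n \<ge> 1\<close> h_carrier in \<open>auto simp: \<psi>_def\<close>)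
  have bottom: "finprod G (\<psi> c) {..<n} = h c \<otimes> r" if "c \<in> {0, 2*n}" for c
  proof -
    have "finprod G (\<psi> c) {..<n} = finprod G (\<psi> c) (insert 0 {1..<n})"
      using \<open>n \<ge> 1\<close> by (intro arg_cong[where f = "finprod G (\<psi> c)"]) auto
    also have "finprod G (\<psi> c) (insert 0 {1..<n}) = \<psi> c 0 \<otimes> finprod G (\<psi> c) {1..<n}"
      by (rule finprod_insert) (use \<psi>_carrier[OF that] \<open>n \<ge> 1\<close> in auto)
    also have "finprod G (\<psi> c) {1..<n} = r"
      unfolding r_def by (rule finprod_cong') (use h_carrier in \<open>auto simp: \<psi>_def\<close>)
    also have "\<psi> c 0 = h c" by (simp add: \<psi>_def)
    finally show ?thesis .
  qed
  have "h 0 \<noteq> h (2*n)" using inj_on_eq_iff[OF h_inj, of 0 "2*n"] \<open>n \<ge> 1\<close> by simp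
  moreover have "h 0 \<in> carrier G" "h (2*n) \<in> carrier G" using h_carrier by auto
  ultimately have "h 0 \<otimes> r \<noteq> h (2*n) \<otimes> r" using r r_cancel by blast
  then obtain c where "c \<in> {0, 2*n}" "finprod G (\<psi> c) {..<n} \<noteq> finprod G (\<psi> c) {n..<2*n}"
    using bottom top by (metis insertCI)
  then show ?thesis using that \<psi>_inj \<psi>_carrier by blast
qed

lemma not_k_close_if_large:
  assumes "finite (carrier G)" and "2 * n < card (carrier G)" and "k < n"
  shows "\<not> k_close G k"
proof -
  have "n \<ge> 1" using \<open>k < n\<close> by simp
  then obtain \<psi> where "inj_on \<psi> {..<2*n}" "\<psi> \<in> {..<2*n} \<rightarrow> carrier G"
    "finprod G \<psi> {..<n} \<noteq> finprod G \<psi> {n..<2*n}"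
    using exists_unbalanced_labeling assms(1,2) by blast
  then show ?thesis using not_k_close_if_unbalanced_labeling \<open>k < n\<close> by blast
qed

end

lemma carrier_Z2pow: "carrier (Z2pow d) = (\<Pi>\<^sub>E i\<in>{..<d}. {0..<2::int})"
  by (simp add: Z2pow_def carrier_integer_mod_group)

lemma comm_group_Z2pow: "comm_group (Z2pow d)"
proof -
  interpret group "Z2pow d" unfolding Z2pow_def by (rule product_group) simp
  show ?thesis by unfold_locales (auto simp: Z2pow_def add.commute)
qed

lemma Z2pow_square_one: "x \<in> carrier (Z2pow d) \<Longrightarrow> x \<otimes>\<^bsub>Z2pow d\<^esub> x = \<one>\<^bsub>Z2pow d\<^esub>"
  by (auto simp: Z2pow_def carrier_integer_mod_group PiE_iff)

lemma card_carrier_Z2pow: "card (carrier (Z2pow d)) = 2 ^ d"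
  by (simp add: carrier_Z2pow card_PiE)

lemma finite_carrier_Z2pow: "finite (carrier (Z2pow d))"
  by (simp add: carrier_Z2pow finite_PiE)

lemma linear_less_power_two: "d \<ge> 4 \<Longrightarrow> 2 * d + 2 < (2::nat) ^ d"
  by (induction d rule: dec_induct) simp_all

theorem theorem6p13:
  fixes d :: nat
  assumes "d \<ge> 4"
  shows "\<not> k_close (Z2pow d) (davenport (Z2pow d) - 1)"
proof -
  interpret comm_group "Z2pow d" by (rule comm_group_Z2pow)
  have "davenport (Z2pow d) \<le> d + 1"
    by (rule davenport_le_exp2)
      (simp_all add: Z2pow_square_one finite_carrier_Z2pow card_carrier_Z2pow)
  moreover have "2 * (d + 1) < card (carrier (Z2pow d))"
    using linear_less_power_two[OF assms] by (simp add: card_carrier_Z2pow)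
  ultimately show ?thesis
    using not_k_close_if_large[OF finite_carrier_Z2pow, of "d + 1"] by simp
qed

end
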